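(* Let $n,m\in\mathbb{N}$, $f:\mathbb{F}_2^n\to\mathbb{F}_2$, $\mathbf{y}\in\mathbb{F}_2^n$, and $h(\mathbf{x})=\mathbf{x}\cdot\mathbf{y}$. Then: (i) when $A^{(m)3,3}_n(h,f,f)$ is executed, the probability of measuring $\ket{0^n}$ is $2^{-2n}|C^{(m)}_f(\mathbf{y})|^2$; (ii) when $A^{(m)2,3}_n(h,f,f)$ is executed, the probability of measuring the driving qubit in $\ket{0}$ is $\frac12\left[1+\Re\left(2^{-n}\zeta_m^{-wt(\mathbf{y})}C^{(m)}_f(\mathbf{y})\right)\right]$.
   Context: $\zeta_m=e^{2\pi i/m}$, $\overline{\zeta_m}$ its conjugate; $wt$ is Hamming weight; $\mathbf{x}\cdot\mathbf{y}=\bigoplus_i x_iy_i$; $\mathbf{x}\odot\mathbf{y}=\sum_ix_iy_i$ in the integers. $m$-autocorrelation: $C^{(m)}_{f}(\mathbf{y})=\sum_{\mathbf{x}}(-1)^{f(\mathbf{x})\oplus f(\mathbf{x}\oplus\mathbf{y})}(\zeta_m^2)^{\mathbf{x}\odot\mathbf{y}}$. Gates: $\mathrm{H}$ Hadamard; $\Omega_m=\frac{1}{\sqrt2}\begin{pmatrix}1&\zeta_m\\1&-\zeta_m\end{pmatrix}$; $\overline{\Omega}_m=\frac{1}{\sqrt2}\begin{pmatrix}1&\overline{\zeta_m}\\1&-\overline{\zeta_m}\end{pmatrix}$; $\mathrm{S}_m=\mathrm{diag}(1,\zeta_m)$; $U_f$ is the phase oracle $\ket{\mathbf{x}}\mapsto(-1)^{f(\mathbf{x})}\ket{\mathbf{x}}$.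 Algorithm $A^{(m)3,3}_n(f_1,f_2,f_3)$: from $\ket{0^n}$ apply in order $\mathrm{H}^{\otimes n}$, $U_{f_2}$, $\Omega_m^{\otimes n}$, $U_{f_1}$, $\mathrm{H}^{\otimes n}$, $U_{f_3}$, $\overline{\Omega}_m^{\otimes n}$, then measure all qubits. Algorithm $A^{(m)2,3}_n(f_1,f_2,f_3)$: driving qubit in $\ket{+}$, $n$-qubit register in $\ket{0^n}$; apply $\mathrm{H}^{\otimes n}$ to the register; controlled on driving qubit $\ket{0}$ apply $U_{f_2}$, $\Omega_m^{\otimes n}$, $U_{f_1}$, $\mathrm{H}^{\otimes n}$ in order; controlled on driving qubit $\ket{1}$ apply $\mathrm{S}_m^{\otimes n}$, $U_{f_3}$ in order; apply $\mathrm{H}$ to the driving qubit and measure it. *)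

theory Defs
  imports Complex_Main
begin

section \<open>Bit vectors in F_2^n, represented as boolean lists of length n\<close>

definition bvecs :: "nat \<Rightarrow> bool list set" where
  "bvecs n = {xs. length xs = n}"

definition bdot :: "bool list \<Rightarrow> bool list \<Rightarrow> bool" where
  "bdot xs ys = odd (length (filter id (map2 (\<and>) xs ys)))"

definition idot :: "bool list \<Rightarrow> bool list \<Rightarrow> nat" where
  "idot xs ys = length (filter id (map2 (\<and>) xs ys))"

definition bxor :: "bool list \<Rightarrow> bool list \<Rightarrow> bool list" where
  "bxor xs ys = map2 (\<noteq>) xs ys"

definition wt :: "bool list \<Rightarrow> nat" where
  "wt xs = length (filter id xs)"

definition sgnb :: "bool \<Rightarrow> complex" where
  "sgnb b = (if b then -1 else 1)"

definition zeta :: "nat \<Rightarrow> complex" where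
  "zeta m = cis (2 * pi / real m)"

definition autocorr :: "nat \<Rightarrow> nat \<Rightarrow> (bool list \<Rightarrow> bool) \<Rightarrow> bool list \<Rightarrow> complex" where
  "autocorr m n f y =
     (\<Sum>x\<in>bvecs n. sgnb (f x \<noteq> f (bxor x y)) * ((zeta m)\<^sup>2) ^ idot x y)"

type_synonym state = "bool list \<Rightarrow> complex"

(* single-qubit gate: g out in is the matrix entry (row out, column in); False = |0>, True = |1> *)
type_synonym gate = "bool \<Rightarrow> bool \<Rightarrow> complex"

definition Hg :: gate where
  "Hg a b = (if a \<and> b then -1 else 1) / sqrt 2"

definition Omega :: "nat \<Rightarrow> gate" where
  "Omega m a b = (if b then (if a then - zeta m else zeta m) else 1) / sqrt 2"

definition Omegabar :: "nat \<Rightarrow> gate" where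
  "Omegabar m a b = (if b then (if a then - cnj (zeta m) else cnj (zeta m)) else 1) / sqrt 2"

definition Sg :: "nat \<Rightarrow> gate" where
  "Sg m a b = (if a \<noteq> b then 0 else if a then zeta m else 1)"

definition tensor_pow :: "nat \<Rightarrow> gate \<Rightarrow> state \<Rightarrow> state" where
  "tensor_pow n g \<psi> = (\<lambda>y. \<Sum>x\<in>bvecs n. (\<Prod>i<n. g (y ! i) (x ! i)) * \<psi> x)"

definition phase_orc :: "(bool list \<Rightarrow> bool) \<Rightarrow> state \<Rightarrow> state" where
  "phase_orc f \<psi> = (\<lambda>x. sgnb (f x) * \<psi> x)"

definition ket0 :: "nat \<Rightarrow> state" where
  "ket0 n = (\<lambda>x. if x = replicate n False then 1 else 0)"

definition A33_state :: "nat \<Rightarrow> nat \<Rightarrow> (bool list \<Rightarrow> bool) \<Rightarrow> (bool list \<Rightarrow> bool)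
    \<Rightarrow> (bool list \<Rightarrow> bool) \<Rightarrow> state" where
  "A33_state m n f1 f2 f3 =
     tensor_pow n (Omegabar m)
      (phase_orc f3
        (tensor_pow n Hg
          (phase_orc f1
            (tensor_pow n (Omega m)
              (phase_orc f2
                (tensor_pow n Hg (ket0 n)))))))"

definition A33_prob :: "nat \<Rightarrow> nat \<Rightarrow> (bool list \<Rightarrow> bool) \<Rightarrow> (bool list \<Rightarrow> bool)
    \<Rightarrow> (bool list \<Rightarrow> bool) \<Rightarrow> bool list \<Rightarrow> real" where
  "A33_prob m n f1 f2 f3 z = (cmod (A33_state m n f1 f2 f3 z))\<^sup>2"

section \<open>Algorithm A23 (driving qubit + n-qubit register)\<close>

type_synonym dstate = "bool \<times> bool list \<Rightarrow> complex"

definition init23 :: "nat \<Rightarrow> dstate" where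
  "init23 n = (\<lambda>(c, x). (if x = replicate n False then 1 / sqrt 2 else 0))"

definition reg_op :: "(state \<Rightarrow> state) \<Rightarrow> dstate \<Rightarrow> dstate" where
  "reg_op U \<psi> = (\<lambda>(c, x). U (\<lambda>z. \<psi> (c, z)) x)"

definition ctrl :: "bool \<Rightarrow> (state \<Rightarrow> state) \<Rightarrow> dstate \<Rightarrow> dstate" where
  "ctrl b U \<psi> = (\<lambda>(c, x). if c = b then U (\<lambda>z. \<psi> (c, z)) x else \<psi> (c, x))"

definition drive_gate :: "gate \<Rightarrow> dstate \<Rightarrow> dstate" where
  "drive_gate g \<psi> = (\<lambda>(c, x). g c False * \<psi> (False, x) + g c True * \<psi> (True, x))"

definition A23_state :: "nat \<Rightarrow> nat \<Rightarrow> (bool list \<Rightarrow> bool) \<Rightarrow> (bool list \<Rightarrow> bool)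
    \<Rightarrow> (bool list \<Rightarrow> bool) \<Rightarrow> dstate" where
  "A23_state m n f1 f2 f3 =
     drive_gate Hg
      (ctrl True (phase_orc f3)
        (ctrl True (tensor_pow n (Sg m))
          (ctrl False (tensor_pow n Hg)
            (ctrl False (phase_orc f1)
              (ctrl False (tensor_pow n (Omega m))
                (ctrl False (phase_orc f2)
                  (reg_op (tensor_pow n Hg) (init23 n))))))))"

definition A23_prob0 :: "nat \<Rightarrow> nat \<Rightarrow> (bool list \<Rightarrow> bool) \<Rightarrow> (bool list \<Rightarrow> bool)
    \<Rightarrow> (bool list \<Rightarrow> bool) \<Rightarrow> real" where
  "A23_prob0 m n f1 f2 f3 = (\<Sum>x\<in>bvecs n. (cmod (A23_state m n f1 f2 f3 (False, x)))\<^sup>2)"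

end

theory Submission
  imports Defs
begin

text \<open>
  Since Omega_m = H S_m, the block H^n U_h Omega_m^n for the linear function h x = x . y is
  S_m^n followed by H^n U_h H^n, and by Walsh-Hadamard inversion the latter is the translation
  x |-> x xor y. Hence both algorithms produce, up to normalisation, the amplitudes a (x xor y)
  with a x = (-1)^(f x) zeta_m^(wt x). A^(3,3) projects them onto a (the amplitude of |0^n> after
  U_f and conj(Omega_m)^n), while A^(2,3) lets them interfere with its other branch U_f S_m^n,
  which produces a itself. Either way the outcome is governed by
  sum_w conj (a w) a (w xor y) = zeta_m^(wt y) conj (C_f(y)), which holds because
  wt (w xor y) = wt w + wt y - 2 (w odot y).
\<close>

lemma idot_Cons [simp]: "idot (a # x) (b # y) = (if a \<and> b then 1 else 0) + idot x y"
  by (simp add: idot_def)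

lemma idot_Nil [simp]: "idot [] y = 0" "idot x [] = 0"
  by (simp_all add: idot_def)

lemma wt_Cons [simp]: "wt (a # x) = (if a then 1 else 0) + wt x"
  by (simp add: wt_def)

lemma wt_Nil [simp]: "wt [] = 0"
  by (simp add: wt_def)

lemma bxor_Cons [simp]: "bxor (a # x) (b # y) = (a \<noteq> b) # bxor x y"
  by (simp add: bxor_def)

lemma bxor_Nil [simp]: "bxor [] y = []" "bxor x [] = []"
  by (simp_all add: bxor_def)

lemma length_bxor [simp]: "length (bxor x y) = min (length x) (length y)"
  by (simp add: bxor_def)

lemma idot_commute: "idot x y = idot y x"
proof (induction x arbitrary: y)
  case Nil
  then show ?case by simp
next
  case (Cons a x)
  then show ?case by (cases y) auto
qed

lemma neg_one_power_idot_bxor: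
  "length u = length v \<Longrightarrow>
     (-1 :: 'a :: ring_1) ^ idot z (bxor u v) = (-1) ^ idot z u * (-1) ^ idot z v"
proof (induction u v arbitrary: z rule: list_induct2)
  case Nil
  then show ?case by simp
next
  case (Cons a u b v)
  then show ?case by (cases z) (auto simp: power_add)
qed

lemma wt_bxor: "length x = length y \<Longrightarrow> wt (bxor x y) + 2 * idot x y = wt x + wt y"
  by (induction x y rule: list_induct2) auto

lemma bxor_eq_replicate_False_iff:
  "length x = length y \<Longrightarrow> bxor x y = replicate (length x) False \<longleftrightarrow> x = y"
  by (induction x y rule: list_induct2) auto

lemma sgnb_bdot: "sgnb (bdot x y) = (-1) ^ idot x y"
  by (simp add: sgnb_def bdot_def idot_def)

lemma sgnb_neq: "sgnb (a \<noteq> b) = sgnb a * sgnb b"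
  by (simp add: sgnb_def)

lemma cnj_sgnb [simp]: "cnj (sgnb b) = sgnb b"
  by (simp add: sgnb_def)

lemma bvecs_eq_lists: "bvecs n = {xs. set xs \<subseteq> UNIV \<and> length xs = n}"
  by (simp add: bvecs_def)

lemma finite_bvecs [simp]: "finite (bvecs n)"
  unfolding bvecs_eq_lists by (rule finite_lists_length_eq) simp

lemma card_bvecs: "card (bvecs n) = 2 ^ n"
  using card_lists_length_eq[of "UNIV :: bool set" n] by (simp add: bvecs_eq_lists)

lemma length_in_bvecs [simp]: "length x = n \<Longrightarrow> x \<in> bvecs n"
  by (simp add: bvecs_def)

lemma sum_bvecs_Suc:
  "(\<Sum>x\<in>bvecs (Suc n). g x) = (\<Sum>x\<in>bvecs n. g (True # x)) + (\<Sum>x\<in>bvecs n. g (False # x))"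
proof -
  have "bvecs (Suc n) = Cons True ` bvecs n \<union> Cons False ` bvecs n"
    by (auto simp: bvecs_def length_Suc_conv)
  then show ?thesis
    unfolding \<open>bvecs (Suc n) = _\<close> by (subst sum.union_disjoint) (auto simp: sum.reindex)
qed

lemma sum_neg_one_power_idot:
  "length v = n \<Longrightarrow>
     (\<Sum>z\<in>bvecs n. (-1 :: 'a :: ring_1) ^ idot z v) = (if v = replicate n False then 2 ^ n else 0)"
proof (induction n arbitrary: v)
  case 0
  then show ?case by (simp add: bvecs_def)
next
  case (Suc n)
  then obtain b v' where "v = b # v'" "length v' = n"
    by (cases v) auto
  with Suc.IH[of v'] show ?case
    by (cases b) (auto simp: sum_bvecs_Suc sum_negf mult_2)
qed

lemma walsh_inversion:
  assumes "length u = n"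
  shows "(\<Sum>z\<in>bvecs n. (-1) ^ idot z u * (\<Sum>x\<in>bvecs n. (-1) ^ idot z x * g x))
           = (2 :: 'a :: comm_ring_1) ^ n * g u"
proof -
  have "(-1) ^ idot z u * (\<Sum>x\<in>bvecs n. (-1) ^ idot z x * g x)
      = (\<Sum>x\<in>bvecs n. g x * (-1) ^ idot z (bxor u x))" for z
    using assms
    by (auto simp: sum_distrib_left bvecs_def neg_one_power_idot_bxor mult_ac intro!: sum.cong)
  then have "(\<Sum>z\<in>bvecs n. (-1) ^ idot z u * (\<Sum>x\<in>bvecs n. (-1) ^ idot z x * g x))
      = (\<Sum>x\<in>bvecs n. g x * (\<Sum>z\<in>bvecs n. (-1) ^ idot z (bxor u x)))"
    by (simp add: sum_distrib_left) (rule sum.swap)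
  also have "\<dots> = (\<Sum>x\<in>bvecs n. if x = u then 2 ^ n * g x else 0)"
  proof (intro sum.cong refl)
    fix x
    assume "x \<in> bvecs n"
    then have "length x = n"
      by (simp add: bvecs_def)
    with assms show "g x * (\<Sum>z\<in>bvecs n. (-1) ^ idot z (bxor u x)) = (if x = u then 2 ^ n * g x else 0)"
      using bxor_eq_replicate_False_iff[of u x] by (auto simp: sum_neg_one_power_idot mult.commute)
  qed
  also have "\<dots> = 2 ^ n * g u"
    using assms by simp
  finally show ?thesis .
qed

definition inv_sqrt2 :: complex where
  "inv_sqrt2 = 1 / sqrt 2"

lemma inv_sqrt2_power2: "inv_sqrt2 ^ 2 = 1 / 2"
  by (simp add: inv_sqrt2_def power_divide flip: of_real_power)

lemma cmod_inv_sqrt2_power2: "cmod inv_sqrt2 ^ 2 = 1 / 2"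
  by (simp add: inv_sqrt2_def norm_divide power_divide)

lemma inv_sqrt2_power_double: "inv_sqrt2 ^ n * inv_sqrt2 ^ n = 1 / 2 ^ n"
proof -
  have "inv_sqrt2 ^ n * inv_sqrt2 ^ n = (inv_sqrt2 ^ 2) ^ n"
    by (simp add: power2_eq_square power_mult_distrib)
  then show ?thesis
    by (simp add: inv_sqrt2_power2 power_divide)
qed

lemma prod_lessThan_nth_eq_prod_list_map2:
  "length y = length x \<Longrightarrow> (\<Prod>i<length y. g (y ! i) (x ! i)) = prod_list (map2 g y x)"
  by (induction y x rule: list_induct2) (auto simp: prod.lessThan_Suc_shift simp del: prod.lessThan_Suc)

lemma tensor_pow_eq_prod_list:
  "length y = n \<Longrightarrow> tensor_pow n g \<psi> y = (\<Sum>x\<in>bvecs n. prod_list (map2 g y x) * \<psi> x)"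
  unfolding tensor_pow_def
  by (auto simp: bvecs_def prod_lessThan_nth_eq_prod_list_map2 intro!: sum.cong)

lemma prod_list_Hg:
  "length z = length x \<Longrightarrow> prod_list (map2 Hg z x) = inv_sqrt2 ^ length z * (-1) ^ idot z x"
  by (induction z x rule: list_induct2) (auto simp: Hg_def inv_sqrt2_def)

lemma prod_list_Omega:
  "length z = length x \<Longrightarrow>
     prod_list (map2 (Omega m) z x) = inv_sqrt2 ^ length z * (-1) ^ idot z x * zeta m ^ wt x"
  by (induction z x rule: list_induct2) (auto simp: Omega_def inv_sqrt2_def)

lemma prod_list_Omegabar_zero:
  "prod_list (map2 (Omegabar m) (replicate (length x) False) x)
     = inv_sqrt2 ^ length x * cnj (zeta m) ^ wt x"
  by (induction x) (auto simp: Omegabar_def inv_sqrt2_def)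

lemma prod_list_Sg:
  "length z = length x \<Longrightarrow> prod_list (map2 (Sg m) z x) = (if z = x then zeta m ^ wt x else 0)"
  by (induction z x rule: list_induct2) (auto simp: Sg_def)

lemma tensor_pow_Hg:
  "length w = n \<Longrightarrow>
     tensor_pow n Hg \<psi> w = inv_sqrt2 ^ n * (\<Sum>z\<in>bvecs n. (-1) ^ idot w z * \<psi> z)"
  by (auto simp: tensor_pow_eq_prod_list prod_list_Hg bvecs_def sum_distrib_left mult.assoc
           intro!: sum.cong)

lemma tensor_pow_Omega:
  "length z = n \<Longrightarrow>
     tensor_pow n (Omega m) \<psi> z
       = inv_sqrt2 ^ n * (\<Sum>x\<in>bvecs n. (-1) ^ idot z x * (zeta m ^ wt x * \<psi> x))"
  by (auto simp: tensor_pow_eq_prod_list prod_list_Omega bvecs_def sum_distrib_left mult.assoc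
           intro!: sum.cong)

lemma tensor_pow_Omegabar_zero:
  "tensor_pow n (Omegabar m) \<psi> (replicate n False)
     = inv_sqrt2 ^ n * (\<Sum>w\<in>bvecs n. cnj (zeta m) ^ wt w * \<psi> w)"
  by (auto simp: tensor_pow_eq_prod_list bvecs_def sum_distrib_left mult.assoc
           simp flip: prod_list_Omegabar_zero intro!: sum.cong)

lemma tensor_pow_Sg:
  assumes "length x = n"
  shows "tensor_pow n (Sg m) \<psi> x = zeta m ^ wt x * \<psi> x"
proof -
  have "tensor_pow n (Sg m) \<psi> x = (\<Sum>x'\<in>bvecs n. if x' = x then zeta m ^ wt x * \<psi> x else 0)"
    using assms by (auto simp: tensor_pow_eq_prod_list prod_list_Sg bvecs_def intro!: sum.cong)
  also have "\<dots> = zeta m ^ wt x * \<psi> x"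
    using assms by simp
  finally show ?thesis .
qed

lemma tensor_pow_Hg_ket0: "tensor_pow n Hg (\<lambda>z. c * ket0 n z) = (\<lambda>_. c * inv_sqrt2 ^ n)"
proof
  fix w
  have "(\<Prod>i<n. Hg (w ! i) (replicate n False ! i)) = inv_sqrt2 ^ n"
    by (simp add: Hg_def inv_sqrt2_def)
  then show "tensor_pow n Hg (\<lambda>z. c * ket0 n z) w = c * inv_sqrt2 ^ n"
    by (simp add: tensor_pow_def ket0_def if_distrib cong: if_cong)
qed

lemma tensor_pow_Hg_phase_bdot_Omega:
  assumes "length w = n" "length y = n"
  shows "tensor_pow n Hg (phase_orc (\<lambda>x. bdot x y) (tensor_pow n (Omega m) \<psi>)) w
           = zeta m ^ wt (bxor w y) * \<psi> (bxor w y)"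
proof -
  let ?u = "bxor w y"
  let ?g = "\<lambda>x. zeta m ^ wt x * \<psi> x"
  have "(-1) ^ idot w z * phase_orc (\<lambda>x. bdot x y) (tensor_pow n (Omega m) \<psi>) z
      = inv_sqrt2 ^ n * ((-1) ^ idot z ?u * (\<Sum>x\<in>bvecs n. (-1) ^ idot z x * ?g x))"
    if "z \<in> bvecs n" for z
    using that assms
    by (simp add: bvecs_def phase_orc_def sgnb_bdot tensor_pow_Omega neg_one_power_idot_bxor
        idot_commute[of w] mult_ac)
  then have "tensor_pow n Hg (phase_orc (\<lambda>x. bdot x y) (tensor_pow n (Omega m) \<psi>)) w
      = inv_sqrt2 ^ n * inv_sqrt2 ^ n
        * (\<Sum>z\<in>bvecs n. (-1) ^ idot z ?u * (\<Sum>x\<in>bvecs n. (-1) ^ idot z x * ?g x))"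
    using assms by (simp add: tensor_pow_Hg sum_distrib_left mult.assoc cong: sum.cong)
  also have "\<dots> = ?g ?u"
    using assms walsh_inversion[of ?u n ?g] by (simp add: inv_sqrt2_power_double)
  finally show ?thesis .
qed

definition phase_amp :: "(bool list \<Rightarrow> bool) \<Rightarrow> nat \<Rightarrow> bool list \<Rightarrow> complex" where
  "phase_amp f m x = sgnb (f x) * zeta m ^ wt x"

lemma cmod_zeta [simp]: "cmod (zeta m) = 1"
  by (simp add: zeta_def)

lemma cmod_phase_amp [simp]: "cmod (phase_amp f m x) = 1"
  by (simp add: phase_amp_def sgnb_def norm_mult norm_power)

lemma unimodular_cnj_power_mult_power:
  assumes "cmod u = 1" and "b + d = a + c"
  shows "cnj u ^ a * u ^ b = u ^ c * cnj u ^ d"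
proof -
  have "u * cnj u = 1"
    using complex_norm_square[of u] assms(1) by simp
  then have "cnj u = inverse u"
    by (metis inverse_unique)
  moreover have "u ^ b * u ^ d = u ^ c * u ^ a"
    using assms(2) by (simp flip: power_add add: add.commute)
  moreover have "u \<noteq> 0"
    using assms(1) by auto
  ultimately show ?thesis
    unfolding \<open>cnj u = inverse u\<close> by (simp add: power_inverse field_simps)
qed

lemma sum_cnj_phase_amp_mult_phase_amp_bxor:
  assumes "length y = n"
  shows "(\<Sum>w\<in>bvecs n. cnj (phase_amp f m w) * phase_amp f m (bxor w y))
           = zeta m ^ wt y * cnj (autocorr m n f y)"
  unfolding autocorr_def cnj_sum sum_distrib_left
proof (intro sum.cong refl)
  fix w
  assume "w \<in> bvecs n"
  with assms have "wt (bxor w y) + 2 * idot w y = wt w + wt y"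
    by (simp add: bvecs_def wt_bxor)
  then have "cnj (zeta m) ^ wt w * zeta m ^ wt (bxor w y)
      = zeta m ^ wt y * cnj (zeta m) ^ (2 * idot w y)"
    by (intro unimodular_cnj_power_mult_power) simp_all
  then show "cnj (phase_amp f m w) * phase_amp f m (bxor w y)
      = zeta m ^ wt y * cnj (sgnb (f w \<noteq> f (bxor w y)) * (zeta m)\<^sup>2 ^ idot w y)"
    unfolding sgnb_neq complex_cnj_mult complex_cnj_power power_mult[symmetric]
    by (simp add: phase_amp_def mult_ac)
qed

lemma A33_state_bdot_zero:
  assumes "length y = n"
  shows "A33_state m n (\<lambda>x. bdot x y) f f (replicate n False)
           = zeta m ^ wt y * cnj (autocorr m n f y) / 2 ^ n"
proof -
  have "tensor_pow n Hg (ket0 n) = (\<lambda>_. inv_sqrt2 ^ n)"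
    using tensor_pow_Hg_ket0[of n 1] by simp
  then have "cnj (zeta m) ^ wt w * phase_orc f (tensor_pow n Hg (phase_orc (\<lambda>x. bdot x y)
        (tensor_pow n (Omega m) (phase_orc f (tensor_pow n Hg (ket0 n)))))) w
      = inv_sqrt2 ^ n * (cnj (phase_amp f m w) * phase_amp f m (bxor w y))"
    if "w \<in> bvecs n" for w
    using that assms tensor_pow_Hg_phase_bdot_Omega[of w n y m "phase_orc f (\<lambda>_. inv_sqrt2 ^ n)"]
    by (simp add: bvecs_def phase_orc_def phase_amp_def mult_ac)
  then have "A33_state m n (\<lambda>x. bdot x y) f f (replicate n False)
      = inv_sqrt2 ^ n * inv_sqrt2 ^ n
        * (\<Sum>w\<in>bvecs n. cnj (phase_amp f m w) * phase_amp f m (bxor w y))"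
    by (simp add: A33_state_def tensor_pow_Omegabar_zero sum_distrib_left mult.assoc
        cong: sum.cong)
  then show ?thesis
    using assms by (simp add: inv_sqrt2_power_double sum_cnj_phase_amp_mult_phase_amp_bxor)
qed

definition branch_state :: "state \<Rightarrow> state \<Rightarrow> dstate" where
  "branch_state \<psi>0 \<psi>1 = (\<lambda>(c, x). if c then \<psi>1 x else \<psi>0 x)"

lemma ctrl_False_branch_state: "ctrl False U (branch_state \<psi>0 \<psi>1) = branch_state (U \<psi>0) \<psi>1"
  by (auto simp: ctrl_def branch_state_def fun_eq_iff)

lemma ctrl_True_branch_state: "ctrl True U (branch_state \<psi>0 \<psi>1) = branch_state \<psi>0 (U \<psi>1)"
  by (auto simp: ctrl_def branch_state_def fun_eq_iff)

lemma reg_op_branch_state: "reg_op U (branch_state \<psi>0 \<psi>1) = branch_state (U \<psi>0) (U \<psi>1)"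
  by (auto simp: reg_op_def branch_state_def fun_eq_iff)

lemma init23_eq_branch_state:
  "init23 n = branch_state (\<lambda>x. inv_sqrt2 * ket0 n x) (\<lambda>x. inv_sqrt2 * ket0 n x)"
  by (auto simp: init23_def ket0_def inv_sqrt2_def branch_state_def fun_eq_iff)

lemma drive_gate_Hg_branch_state_False:
  "drive_gate Hg (branch_state \<psi>0 \<psi>1) (False, x) = inv_sqrt2 * (\<psi>0 x + \<psi>1 x)"
  by (simp add: drive_gate_def branch_state_def Hg_def inv_sqrt2_def distrib_left)

lemma A23_state_False:
  "A23_state m n f1 f2 f3 (False, x)
     = inv_sqrt2 * (tensor_pow n Hg (phase_orc f1 (tensor_pow n (Omega m)
                      (phase_orc f2 (\<lambda>_. inv_sqrt2 ^ Suc n)))) x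
                    + phase_orc f3 (tensor_pow n (Sg m) (\<lambda>_. inv_sqrt2 ^ Suc n)) x)"
  unfolding A23_state_def init23_eq_branch_state reg_op_branch_state tensor_pow_Hg_ket0
    ctrl_False_branch_state ctrl_True_branch_state drive_gate_Hg_branch_state_False
  by simp

lemma A23_state_bdot_False:
  assumes "length x = n" "length y = n"
  shows "A23_state m n (\<lambda>x. bdot x y) f f (False, x)
           = inv_sqrt2 ^ (n + 2) * (phase_amp f m (bxor x y) + phase_amp f m x)"
  using assms tensor_pow_Hg_phase_bdot_Omega[of x n y m "phase_orc f (\<lambda>_. inv_sqrt2 ^ Suc n)"]
  by (simp add: A23_state_False tensor_pow_Sg phase_orc_def phase_amp_def algebra_simps)

lemma cmod_add_power2: "cmod (u + v) ^ 2 = cmod u ^ 2 + cmod v ^ 2 + 2 * Re (cnj v * u)"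
  by (simp add: cmod_power2) (simp add: power2_eq_square algebra_simps)

lemma cnj_zeta: "cnj (zeta m) = inverse (zeta m)"
  by (simp add: zeta_def cis_cnj)

lemma A23_prob0_bdot:
  assumes "length y = n"
  shows "A23_prob0 m n (\<lambda>x. bdot x y) f f
           = (1 + Re (inverse (zeta m) ^ wt y * autocorr m n f y) / 2 ^ n) / 2"
proof -
  let ?corr = "\<lambda>x. cnj (phase_amp f m x) * phase_amp f m (bxor x y)"
  have "cmod (inv_sqrt2 ^ (n + 2)) ^ 2 = (cmod inv_sqrt2 ^ 2) ^ (n + 2)"
    by (simp only: norm_power flip: power_mult) (simp add: mult.commute)
  then have "cmod (inv_sqrt2 ^ (n + 2)) ^ 2 = (1 / 2) ^ (n + 2)"
    by (simp add: cmod_inv_sqrt2_power2)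
  then have "cmod (A23_state m n (\<lambda>x. bdot x y) f f (False, x)) ^ 2
      = (1 / 2) ^ (n + 2) * (2 + 2 * Re (?corr x))" if "x \<in> bvecs n" for x
    using that assms
    by (simp add: bvecs_def A23_state_bdot_False norm_mult power_mult_distrib cmod_add_power2)
  then have "A23_prob0 m n (\<lambda>x. bdot x y) f f
      = (\<Sum>x\<in>bvecs n. (1 / 2) ^ (n + 2) * (2 + 2 * Re (?corr x)))"
    unfolding A23_prob0_def by (rule sum.cong[OF refl])
  also have "\<dots> = (1 / 2) ^ (n + 2) * (2 * 2 ^ n + 2 * Re (\<Sum>x\<in>bvecs n. ?corr x))"
  proof -
    have "(\<Sum>x\<in>bvecs n. c * (2 + 2 * r x)) = c * (2 * 2 ^ n + 2 * (\<Sum>x\<in>bvecs n. r x))"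
      for c :: real and r
      by (simp add: sum.distrib card_bvecs flip: sum_distrib_left)
    then show ?thesis
      unfolding Re_sum .
  qed
  also have "Re (\<Sum>x\<in>bvecs n. ?corr x) = Re (inverse (zeta m) ^ wt y * autocorr m n f y)"
    unfolding sum_cnj_phase_amp_mult_phase_amp_bxor[OF assms]
    by (metis cnj.sel(1) complex_cnj_mult complex_cnj_power complex_cnj_cnj cnj_zeta)
  finally show ?thesis
    by (simp add: field_simps power_add)
qed

theorem corollary2:
  fixes n m :: nat and f :: "bool list \<Rightarrow> bool" and y :: "bool list"
  assumes "length y = n"
  shows "A33_prob m n (\<lambda>x. bdot x y) f f (replicate n False)
           = (cmod (autocorr m n f y))\<^sup>2 / 2 ^ (2 * n)
       \<and> A23_prob0 m n (\<lambda>x. bdot x y) f f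
           = (1 + Re (inverse (2 ^ n) * inverse (zeta m) ^ wt y * autocorr m n f y)) / 2"
proof
  show "A33_prob m n (\<lambda>x. bdot x y) f f (replicate n False)
      = (cmod (autocorr m n f y))\<^sup>2 / 2 ^ (2 * n)"
    using A33_state_bdot_zero[OF assms]
    by (simp add: A33_prob_def norm_mult norm_divide norm_power power_divide
        flip: power_mult power_mult_distrib)
  have "Re (inverse (2 ^ n) * z) = Re z / 2 ^ n" for z :: complex
    by (simp add: inverse_eq_divide)
  then show "A23_prob0 m n (\<lambda>x. bdot x y) f f
      = (1 + Re (inverse (2 ^ n) * inverse (zeta m) ^ wt y * autocorr m n f y)) / 2"
    using A23_prob0_bdot[OF assms] by (simp only: mult.assoc)
qed

end
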